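(* There is a function $C(t,\epsilon)$ such that the following holds for every positive integer $t$ and every $\epsilon\in(0,1)$: let $G$ be a connected balanced bipartite graph with parts $X,Y$, with $\delta(G)\geq C(t,\epsilon)$ and with no induced $S_{t,t}$. Then for all $x\in X$ and $y\in Y$ we have $|N(x)\cap U_Y(\epsilon)|\leq C(t,\epsilon)$ and $|N(y)\cap U_X(\epsilon)|\leq C(t,\epsilon)$.
   Context: For positive integers $a,b$, the biclaw $S_{a,b}$ is the graph with vertex set $\{x,x_1,\dots,x_a,y,y_1,\dots,y_b\}$ and edges $xy$, $xy_1,\dots,xy_b$, $yx_1,\dots,yx_a$; "no induced $S_{t,t}$" means no induced subgraph isomorphic to $S_{t,t}$. Balanced means $|X|=|Y|$. For a bipartite graph with parts $X,Y$, $\Delta_X=\max_{x\in X} d(x)$, $\Delta_Y=\max_{y\in Y}d(y)$, and for $\epsilon\in(0,1)$, $U_X(\epsilon)=\{x\in X: d(x)\leq (1-\epsilon)\Delta_X\}$, $U_Y(\epsilon)=\{y\in Y: d(y)\leq(1-\epsilon)\Delta_Y\}$. $N(v)$ is the neighbourhood and $\delta(G)$ the minimum degree. *)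

theory Defs
  imports Complex_Main
begin

definition graph :: "nat set \<Rightarrow> (nat \<Rightarrow> nat \<Rightarrow> bool) \<Rightarrow> bool" where
  "graph V E \<longleftrightarrow> finite V \<and> (\<forall>u v. E u v \<longrightarrow> u \<in> V \<and> v \<in> V)
     \<and> (\<forall>u v. E u v \<longrightarrow> E v u) \<and> (\<forall>u. \<not> E u u)"

definition nbhd :: "nat set \<Rightarrow> (nat \<Rightarrow> nat \<Rightarrow> bool) \<Rightarrow> nat \<Rightarrow> nat set" where
  "nbhd V E v = {u \<in> V. E v u}"

definition degree :: "nat set \<Rightarrow> (nat \<Rightarrow> nat \<Rightarrow> bool) \<Rightarrow> nat \<Rightarrow> nat" where
  "degree V E v = card (nbhd V E v)"

definition min_degree_ge :: "nat set \<Rightarrow> (nat \<Rightarrow> nat \<Rightarrow> bool) \<Rightarrow> real \<Rightarrow> bool" where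
  "min_degree_ge V E c \<longleftrightarrow> (\<forall>v\<in>V. real (degree V E v) \<ge> c)"

definition connected_graph :: "nat set \<Rightarrow> (nat \<Rightarrow> nat \<Rightarrow> bool) \<Rightarrow> bool" where
  "connected_graph V E \<longleftrightarrow> (\<forall>u\<in>V. \<forall>v\<in>V. E\<^sup>*\<^sup>* u v)"

definition bipartite_parts :: "nat set \<Rightarrow> (nat \<Rightarrow> nat \<Rightarrow> bool) \<Rightarrow> nat set \<Rightarrow> nat set \<Rightarrow> bool" where
  "bipartite_parts V E X Y \<longleftrightarrow> X \<inter> Y = {} \<and> X \<union> Y = V
     \<and> (\<forall>u v. E u v \<longrightarrow> (u \<in> X \<and> v \<in> Y) \<or> (u \<in> Y \<and> v \<in> X))"

definition max_deg :: "nat set \<Rightarrow> (nat \<Rightarrow> nat \<Rightarrow> bool) \<Rightarrow> nat set \<Rightarrow> nat" where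
  "max_deg V E X = Max (degree V E ` X)"

definition low_set :: "nat set \<Rightarrow> (nat \<Rightarrow> nat \<Rightarrow> bool) \<Rightarrow> nat set \<Rightarrow> real \<Rightarrow> nat set" where
  "low_set V E X \<epsilon> = {x \<in> X. real (degree V E x) \<le> (1 - \<epsilon>) * real (max_deg V E X)}"

datatype bcv = BX | BY | BXi nat | BYi nat

definition biclaw_verts :: "nat \<Rightarrow> nat \<Rightarrow> bcv set" where
  "biclaw_verts a b = {BX, BY} \<union> BXi ` {1..a} \<union> BYi ` {1..b}"

fun biclaw_adj :: "bcv \<Rightarrow> bcv \<Rightarrow> bool" where
  "biclaw_adj BX BY = True"
| "biclaw_adj BY BX = True"
| "biclaw_adj BX (BYi _) = True"
| "biclaw_adj (BYi _) BX = True"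
| "biclaw_adj BY (BXi _) = True"
| "biclaw_adj (BXi _) BY = True"
| "biclaw_adj _ _ = False"

definition has_induced_biclaw :: "nat set \<Rightarrow> (nat \<Rightarrow> nat \<Rightarrow> bool) \<Rightarrow> nat \<Rightarrow> nat \<Rightarrow> bool" where
  "has_induced_biclaw V E a b \<longleftrightarrow> (\<exists>f. inj_on f (biclaw_verts a b) \<and> f ` biclaw_verts a b \<subseteq> V
     \<and> (\<forall>u\<in>biclaw_verts a b. \<forall>v\<in>biclaw_verts a b. E (f u) (f v) \<longleftrightarrow> biclaw_adj u v))"

end

(* Let ymax be a vertex of maximum degree Delta in Y and call y in Y heavy if it has at least
   (1 - eps/4) Delta neighbours in N(ymax). Heavy vertices have degree above (1 - eps) Delta, so it
   suffices to show that every x in X has fewer than 3K non-heavy neighbours, K = t (16/eps)^t.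

   The engine is a greedy count: if xy is an edge, T is a subset of N(y) and every vertex of a set
   R in N(x) misses a fraction alpha of T, then |R| >= t (2/alpha)^t yields t vertices of T and t of
   R with no edges between them, which together with x and y span an induced S_{t,t}. Applied three
   times, this shows that a vertex of X adjacent to a heavy vertex has fewer than 3K non-heavy
   neighbours, and that this adjacency passes from x to every x' at distance two (otherwise the
   middle vertex would have degree below 10K). Connectivity spreads it from the neighbours of ymax
   to all of X. *)

theory Submission
  imports Defs
begin

lemma sum_card_filter_swap:
  assumes "finite A" "finite B"
  shows "(\<Sum>a\<in>A. card {b\<in>B. P a b}) = (\<Sum>b\<in>B. card {a\<in>A. P a b})"
proof -
  have "(\<Sum>a\<in>A. card {b\<in>B. P a b}) = (\<Sum>a\<in>A. \<Sum>b\<in>B. if P a b then 1 else 0::nat)"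
    using assms by (simp add: sum.inter_filter[symmetric])
  also have "\<dots> = (\<Sum>b\<in>B. \<Sum>a\<in>A. if P a b then 1 else 0::nat)"
    by (rule sum.swap)
  also have "\<dots> = (\<Sum>b\<in>B. card {a\<in>A. P a b})"
    using assms by (simp add: sum.inter_filter[symmetric])
  finally show ?thesis .
qed

lemma exists_ge_average:
  assumes "finite T" "T \<noteq> {}" "finite R" "\<forall>r\<in>R. s \<le> card {u\<in>T. P r u}"
  shows "\<exists>u\<in>T. card R * s \<le> card {r\<in>R. P r u} * card T"
proof (rule ccontr)
  assume "\<not> ?thesis"
  then have "(\<Sum>u\<in>T. card {r\<in>R. P r u} * card T) < (\<Sum>u\<in>T. card R * s)"
    using assms(1,2) by (intro sum_strict_mono) auto
  then have "(\<Sum>u\<in>T. card {r\<in>R. P r u}) * card T < card T * (card R * s)"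
    by (simp add: sum_distrib_right)
  then have "(\<Sum>r\<in>R. card {u\<in>T. P r u}) < card R * s"
    using sum_card_filter_swap[OF assms(1,3), of "\<lambda>u r. P r u"] by (simp add: mult.commute)
  moreover have "card R * s \<le> (\<Sum>r\<in>R. card {u\<in>T. P r u})"
    using sum_mono[of R "\<lambda>_. s"] assms(4) by simp
  ultimately show False by simp
qed

lemma card_filter_not_ge:
  assumes "finite T" "finite S" "{u\<in>T. P u} \<subseteq> S"
  shows "real (card T) - real (card S) \<le> real (card {u\<in>T. \<not> P u})"
proof -
  have "{u\<in>T. \<not> P u} = T - {u\<in>T. P u}" by blast
  then have "card {u\<in>T. \<not> P u} = card T - card {u\<in>T. P u}"
    using assms(1) by (simp add: card_Diff_subset)
  moreover have "card {u\<in>T. P u} \<le> card T" "card {u\<in>T. P u} \<le> card S"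
    using assms by (auto intro: card_mono)
  ultimately show ?thesis by linarith
qed

lemma greedy_bound_step:
  fixes m nR nR' nT s j :: nat
  assumes "Suc j \<le> s" "s \<le> nT" "nR * s \<le> nR' * nT"
    and "real m \<le> real nR * ((real s - real (Suc j)) / real nT) ^ Suc j"
  shows "real m \<le> real nR' * ((real (s - 1) - real j) / real (nT - 1)) ^ j"
proof -
  define a where "a = (real s - real (Suc j)) / real nT"
  have "0 \<le> a" unfolding a_def using assms(1) by simp
  have nT_pos: "0 < real nT" using assms(1,2) by simp
  have "real nR * a \<le> real nR * real s / real nT"
    unfolding a_def using nT_pos by (simp add: divide_right_mono mult_left_mono)
  also have "\<dots> \<le> real nR'"
    using assms(3) nT_pos by (simp add: pos_divide_le_eq flip: of_nat_mult)
  finally have nR'_ge: "real nR * a \<le> real nR'" .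
  have "a ^ j \<le> ((real (s - 1) - real j) / real (nT - 1)) ^ j"
  proof (cases "j = 0")
    case False
    then have "0 < real (nT - 1)" using assms(1,2) by simp
    moreover have "real s - real (Suc j) = real (s - 1) - real j"
      using assms(1) by (simp add: of_nat_diff)
    ultimately have "a \<le> (real (s - 1) - real j) / real (nT - 1)"
      unfolding a_def using assms(1,2) by (intro frac_le) (auto simp: of_nat_diff)
    then show ?thesis using \<open>0 \<le> a\<close> by (rule power_mono)
  qed simp
  then have "(real nR * a) * a ^ j \<le> real nR' * ((real (s - 1) - real j) / real (nT - 1)) ^ j"
    using nR'_ge \<open>0 \<le> a\<close> by (intro mult_mono) auto
  then show ?thesis using assms(4) unfolding a_def by (simp add: mult.assoc)
qed

text \<open>Greedy step: some \<open>u \<in> T\<close> is missed by at least a fraction \<open>s / card T\<close> of \<open>R\<close>;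
  keep \<open>u\<close>, keep only those \<open>r\<close> that miss it, and recurse on \<open>T - {u}\<close>.\<close>

lemma exists_anticomplete_subsets_greedy:
  fixes Rel :: "'r \<Rightarrow> 'u \<Rightarrow> bool" and m :: nat
  assumes "finite T" "finite R" "j \<le> s" "0 < m"
    and "\<forall>r\<in>R. s \<le> card {u\<in>T. \<not> Rel r u}"
    and "real m \<le> real (card R) * ((real s - real j) / real (card T)) ^ j"
  shows "\<exists>U R'. U \<subseteq> T \<and> card U = j \<and> R' \<subseteq> R \<and> m \<le> card R' \<and> (\<forall>r\<in>R'. \<forall>u\<in>U. \<not> Rel r u)"
  using assms
proof (induction j arbitrary: T R s)
  case 0
  then show ?case by (intro exI[of _ "{}"] exI[of _ R]) auto
next
  case (Suc j)
  note fin = Suc.prems(1,2) and miss = Suc.prems(5)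
  have "R \<noteq> {}" using Suc.prems(4,6) by auto
  then obtain r0 where "r0 \<in> R" by blast
  then have "s \<le> card T"
    using miss card_mono[OF fin(1), of "{u\<in>T. \<not> Rel r0 u}"] by fastforce
  then have "T \<noteq> {}" using Suc.prems(3) by auto
  then obtain u where "u \<in> T" and u_missed: "card R * s \<le> card {r\<in>R. \<not> Rel r u} * card T"
    using exists_ge_average[OF fin(1) _ fin(2) miss] by blast
  define T' R' where "T' = T - {u}" and "R' = {r\<in>R. \<not> Rel r u}"
  have miss': "\<forall>r\<in>R'. s - 1 \<le> card {v\<in>T'. \<not> Rel r v}"
  proof
    fix r assume "r \<in> R'"
    then have "{v\<in>T'. \<not> Rel r v} = {v\<in>T. \<not> Rel r v} - {u}" "u \<in> {v\<in>T. \<not> Rel r v}"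
      using \<open>u \<in> T\<close> unfolding T'_def R'_def by auto
    then show "s - 1 \<le> card {v\<in>T'. \<not> Rel r v}"
      using miss \<open>r \<in> R'\<close> fin(1) unfolding R'_def by auto
  qed
  have "card T' = card T - 1" using \<open>u \<in> T\<close> fin(1) unfolding T'_def by simp
  then have "real m \<le> real (card R') * ((real (s - 1) - real j) / real (card T')) ^ j"
    using greedy_bound_step[OF Suc.prems(3) \<open>s \<le> card T\<close> u_missed[folded R'_def] Suc.prems(6)]
    by simp
  moreover have "finite T'" "finite R'" "j \<le> s - 1" using fin Suc.prems(3) unfolding T'_def R'_def by auto
  ultimately obtain U R'' where U: "U \<subseteq> T'" "card U = j" "R'' \<subseteq> R'" "m \<le> card R''"
      "\<forall>r\<in>R''. \<forall>v\<in>U. \<not> Rel r v"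
    using Suc.IH[of T' R' "s - 1"] miss' Suc.prems(4) by blast
  moreover have "u \<notin> U" using U(1) unfolding T'_def by blast
  ultimately have "card (insert u U) = Suc j"
    using finite_subset[OF U(1) \<open>finite T'\<close>] by simp
  moreover have "insert u U \<subseteq> T" "R'' \<subseteq> R" "\<forall>r\<in>R''. \<forall>v\<in>insert u U. \<not> Rel r v"
    using U \<open>u \<in> T\<close> unfolding T'_def R'_def by auto
  ultimately show ?case using U(4) by blast
qed

lemma exists_anticomplete_subsets:
  fixes Rel :: "'r \<Rightarrow> 'u \<Rightarrow> bool"
  assumes "finite T" "finite R" "0 < \<alpha>"
    and large: "2 * real t \<le> \<alpha> * real (card T)"
    and miss: "\<forall>r\<in>R. \<alpha> * real (card T) \<le> real (card {u\<in>T. \<not> Rel r u})"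
    and many: "real t * (2 / \<alpha>) ^ t \<le> real (card R)"
  obtains U R' where "U \<subseteq> T" "card U = t" "R' \<subseteq> R" "card R' = t" "\<forall>r\<in>R'. \<forall>u\<in>U. \<not> Rel r u"
proof (cases "t = 0")
  case True
  then show ?thesis using that[of "{}" "{}"] by simp
next
  case False
  define s where "s = nat \<lceil>\<alpha> * real (card T)\<rceil>"
  have s_ge: "\<alpha> * real (card T) \<le> real s" unfolding s_def by linarith
  have miss_s: "\<forall>r\<in>R. s \<le> card {u\<in>T. \<not> Rel r u}"
  proof
    fix r assume "r \<in> R"
    then have "\<lceil>\<alpha> * real (card T)\<rceil> \<le> int (card {u\<in>T. \<not> Rel r u})"
      using miss by (simp add: ceiling_le_iff)
    then show "s \<le> card {u\<in>T. \<not> Rel r u}" unfolding s_def by (simp add: nat_le_iff)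
  qed
  have "card T \<noteq> 0" using large False by (intro notI) simp
  moreover have "\<alpha> * real (card T) / 2 \<le> real s - real t" using s_ge large by linarith
  ultimately have ratio: "\<alpha> / 2 \<le> (real s - real t) / real (card T)"
    by (simp add: pos_le_divide_eq)
  have "real t = real t * (2 / \<alpha>) ^ t * (\<alpha> / 2) ^ t"
    using \<open>0 < \<alpha>\<close> by (simp add: mult.assoc flip: power_mult_distrib)
  also have "\<dots> \<le> real (card R) * (\<alpha> / 2) ^ t"
    using many \<open>0 < \<alpha>\<close> by (intro mult_right_mono) simp_all
  also have "\<dots> \<le> real (card R) * ((real s - real t) / real (card T)) ^ t"
    using ratio \<open>0 < \<alpha>\<close> by (intro mult_left_mono power_mono) simp_all
  finally have "real t \<le> real (card R) * ((real s - real t) / real (card T)) ^ t" .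
  moreover have "t \<le> s" "0 < t" using s_ge large False by linarith+
  ultimately obtain U R0 where "U \<subseteq> T" "card U = t" "R0 \<subseteq> R" "t \<le> card R0"
      "\<forall>r\<in>R0. \<forall>u\<in>U. \<not> Rel r u"
    using exists_anticomplete_subsets_greedy[OF assms(1,2) _ _ miss_s] by meson
  moreover obtain R' where "R' \<subseteq> R0" "card R' = t"
    using obtain_subset_with_card_n[OF \<open>t \<le> card R0\<close>] by blast
  ultimately show ?thesis using that[of U R'] by blast
qed

lemma bipartite_parts_swap: "bipartite_parts V E X Y \<Longrightarrow> bipartite_parts V E Y X"
  unfolding bipartite_parts_def by blast

lemma bipartite_parts_no_triangle:
  assumes "bipartite_parts V E X Y" "E a b" "E a c"
  shows "\<not> E b c"
  using assms unfolding bipartite_parts_def by blast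

lemma mem_biclaw_verts_iff:
  "v \<in> biclaw_verts a b \<longleftrightarrow>
     v = BX \<or> v = BY \<or> (\<exists>i\<in>{1..a}. v = BXi i) \<or> (\<exists>j\<in>{1..b}. v = BYi j)"
  unfolding biclaw_verts_def by auto

text \<open>In a bipartite graph \<open>N x\<close> and \<open>N y\<close> are independent and disjoint for an edge \<open>xy\<close>,
  so the only edges among the chosen vertices are those of the biclaw.\<close>

lemma has_induced_biclaw_if_anticomplete:
  assumes G: "graph V E" and B: "bipartite_parts V E X Y" and "E x y"
    and g: "inj_on g {1..a}" "g ` {1..a} \<subseteq> nbhd V E y - {x}"
    and h: "inj_on h {1..b}" "h ` {1..b} \<subseteq> nbhd V E x - {y}"
    and anticomplete: "\<forall>i\<in>{1..a}. \<forall>j\<in>{1..b}. \<not> E (h j) (g i)"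
  shows "has_induced_biclaw V E a b"
proof -
  have sym: "E u v \<Longrightarrow> E v u" and irrefl: "\<not> E u u" and in_V: "E u v \<Longrightarrow> u \<in> V" for u v
    using G unfolding graph_def by blast+
  note no_triangle = bipartite_parts_no_triangle[OF B]
  have "E y x" using \<open>E x y\<close> by (rule sym)
  have g_facts: "E y (g i) \<and> E (g i) y \<and> \<not> E x (g i) \<and> \<not> E (g i) x \<and>
      g i \<noteq> x \<and> x \<noteq> g i \<and> g i \<noteq> y \<and> y \<noteq> g i"
    if "i \<in> {1..a}" for i
    using g(2) that no_triangle[OF \<open>E y x\<close>] sym irrefl unfolding nbhd_def by blast
  have h_facts: "E x (h j) \<and> E (h j) x \<and> \<not> E y (h j) \<and> \<not> E (h j) y \<and>
      h j \<noteq> x \<and> x \<noteq> h j \<and> h j \<noteq> y \<and> y \<noteq> h j"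
    if "j \<in> {1..b}" for j
    using h(2) that no_triangle[OF \<open>E x y\<close>] sym irrefl unfolding nbhd_def by blast
  have gh_facts: "\<not> E (g i) (h j) \<and> \<not> E (h j) (g i) \<and> g i \<noteq> h j \<and> h j \<noteq> g i"
    if "i \<in> {1..a}" "j \<in> {1..b}" for i j
    using anticomplete that g_facts[OF that(1)] h_facts[OF that(2)] sym by metis
  have gg: "\<not> E (g i) (g i')" if "i \<in> {1..a}" "i' \<in> {1..a}" for i i'
    using g_facts that no_triangle by blast
  have hh: "\<not> E (h j) (h j')" if "j \<in> {1..b}" "j' \<in> {1..b}" for j j'
    using h_facts that no_triangle by blast
  have "x \<noteq> y" using \<open>E x y\<close> irrefl by blast
  note facts = g_facts h_facts gh_facts gg hh \<open>x \<noteq> y\<close> \<open>x \<noteq> y\<close>[symmetric] \<open>E x y\<close> \<open>E y x\<close>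
    irrefl inj_on_eq_iff[OF g(1)] inj_on_eq_iff[OF h(1)]
  define f where "f = case_bcv x y g h"
  have "inj_on f (biclaw_verts a b)"
    by (rule inj_onI, unfold mem_biclaw_verts_iff, elim disjE bexE) (simp_all add: f_def facts)
  moreover have "f ` biclaw_verts a b \<subseteq> V"
    using in_V \<open>E x y\<close> \<open>E y x\<close> g(2) h(2) unfolding nbhd_def
    by (fastforce simp: f_def mem_biclaw_verts_iff)
  moreover have "\<forall>u\<in>biclaw_verts a b. \<forall>v\<in>biclaw_verts a b. E (f u) (f v) \<longleftrightarrow> biclaw_adj u v"
    by (intro ballI, unfold mem_biclaw_verts_iff, elim disjE bexE) (simp_all add: f_def facts)
  ultimately show ?thesis unfolding has_induced_biclaw_def by blast
qed

lemma has_induced_biclaw_if_anticomplete_sets: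
  assumes G: "graph V E" and B: "bipartite_parts V E X Y" and "E x y"
    and U: "U \<subseteq> nbhd V E y - {x}" "card U = a"
    and R: "R \<subseteq> nbhd V E x - {y}" "card R = b"
    and anticomplete: "\<forall>r\<in>R. \<forall>u\<in>U. \<not> E r u"
  shows "has_induced_biclaw V E a b"
proof -
  have "finite (nbhd V E v)" for v using G unfolding graph_def nbhd_def by simp
  then have "finite U" "finite R" using U(1) R(1) finite_subset by blast+
  then obtain g h where "bij_betw g {1..a} U" "bij_betw h {1..b} R"
    using ex_bij_betw_nat_finite_1 U(2) R(2) by metis
  then show ?thesis
    using has_induced_biclaw_if_anticomplete[OF G B \<open>E x y\<close>, of g a h b] U(1) R(1) anticomplete
    by (auto simp: bij_betw_def)
qed

locale biclaw_free_bipartite =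
  fixes V :: "nat set" and E :: "nat \<Rightarrow> nat \<Rightarrow> bool" and X Y :: "nat set" and t :: nat
  assumes graph: "graph V E" and parts: "bipartite_parts V E X Y"
    and biclaw_free: "\<not> has_induced_biclaw V E t t"
begin

abbreviation N :: "nat \<Rightarrow> nat set" where "N \<equiv> nbhd V E"

lemma edge_sym: "E u v \<Longrightarrow> E v u"
  using graph unfolding graph_def by blast

lemma mem_nbhd_iff: "u \<in> N v \<longleftrightarrow> E v u"
  using graph unfolding graph_def nbhd_def by blast

lemma edge_in_V: "E u v \<Longrightarrow> u \<in> V"
  using graph unfolding graph_def by blast

lemma finite_nbhd: "finite (N v)"
  using graph unfolding graph_def nbhd_def by simp

lemma finite_Y: "finite Y"
  using graph parts unfolding graph_def bipartite_parts_def by auto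

lemma X_subset_V: "X \<subseteq> V" and Y_subset_V: "Y \<subseteq> V"
  using parts unfolding bipartite_parts_def by auto

lemma parts_disjoint: "X \<inter> Y = {}"
  using parts unfolding bipartite_parts_def by blast

lemma edge_X_imp_Y: "E u v \<Longrightarrow> u \<in> X \<Longrightarrow> v \<in> Y"
  and edge_Y_imp_X: "E u v \<Longrightarrow> u \<in> Y \<Longrightarrow> v \<in> X"
  using parts unfolding bipartite_parts_def by blast+

lemma card_lt_if_many_non_neighbours:
  assumes "E x y" "T \<subseteq> N y - {x}" "R \<subseteq> N x - {y}" "0 < \<alpha>"
    and "2 * real t \<le> \<alpha> * real (card T)"
    and "\<forall>r\<in>R. \<alpha> * real (card T) \<le> real (card {u\<in>T. \<not> E r u})"
  shows "real (card R) < real t * (2 / \<alpha>) ^ t"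
proof (rule ccontr)
  assume "\<not> ?thesis"
  then have "real t * (2 / \<alpha>) ^ t \<le> real (card R)" by simp
  moreover have "finite T" "finite R"
    using assms(2,3) finite_nbhd finite_subset by blast+
  ultimately obtain U R' where U: "U \<subseteq> T" "card U = t" and R': "R' \<subseteq> R" "card R' = t"
      and "\<forall>r\<in>R'. \<forall>u\<in>U. \<not> E r u"
    using exists_anticomplete_subsets[of T R \<alpha> t E] assms(4-6) by blast
  moreover have "U \<subseteq> N y - {x}" "R' \<subseteq> N x - {y}" using U(1) R'(1) assms(2,3) by blast+
  ultimately have "has_induced_biclaw V E t t"
    using has_induced_biclaw_if_anticomplete_sets[OF graph parts \<open>E x y\<close> _ U(2) _ R'(2)] by blast
  then show False using biclaw_free by blast
qed

end

text \<open>\<open>16 / \<epsilon>\<close> is \<open>2 / \<alpha>\<close> for the smallest miss fraction \<open>\<alpha> = \<epsilon> / 8\<close> used below; the minimum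
  degree required by the theorem is \<open>10 * biclaw_bound t \<epsilon>\<close>.\<close>

definition biclaw_bound :: "nat \<Rightarrow> real \<Rightarrow> real" where
  "biclaw_bound t \<epsilon> = real t * (16 / \<epsilon>) ^ t"

locale max_degree_vertex = biclaw_free_bipartite +
  fixes \<epsilon> :: real and ymax :: nat
  assumes t_pos: "0 < t" and eps_pos: "0 < \<epsilon>" and eps_lt_1: "\<epsilon> < 1"
    and ymax_in_Y: "ymax \<in> Y"
    and degree_le_ymax: "\<And>y. y \<in> Y \<Longrightarrow> degree V E y \<le> degree V E ymax"
    and min_degree: "min_degree_ge V E (10 * biclaw_bound t \<epsilon>)"
begin

abbreviation K :: real where "K \<equiv> biclaw_bound t \<epsilon>"
abbreviation P :: "nat set" where "P \<equiv> N ymax"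
abbreviation \<Delta> :: real where "\<Delta> \<equiv> real (card P)"

definition heavy :: "nat set" where
  "heavy = {y \<in> Y. (1 - \<epsilon> / 4) * \<Delta> \<le> real (card (N y \<inter> P))}"

definition half_heavy :: "nat set" where
  "half_heavy = {y \<in> Y. \<Delta> / 2 \<le> real (card (N y \<inter> P))}"

definition touches_heavy :: "nat \<Rightarrow> bool" where
  "touches_heavy x \<longleftrightarrow> (\<exists>y\<in>heavy. E x y)"

lemma t_ge_1: "1 \<le> real t"
  using t_pos by simp

lemma eps_K_ge: "16 * real t \<le> \<epsilon> * K"
proof -
  have "1 \<le> 16 / \<epsilon>" using eps_pos eps_lt_1 by (simp add: pos_le_divide_eq)
  then have "(16 / \<epsilon>) ^ 1 \<le> (16 / \<epsilon>) ^ t" using t_pos by (intro power_increasing) auto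
  then have "real t * (16 / \<epsilon>) \<le> K" unfolding biclaw_bound_def by (intro mult_left_mono) auto
  then show ?thesis using eps_pos by (simp add: field_simps)
qed

lemma K_ge: "16 * real t \<le> K"
proof -
  have "0 \<le> K" using eps_pos by (simp add: biclaw_bound_def)
  then have "\<epsilon> * K \<le> K" using eps_lt_1 by (simp add: mult_left_le_one_le eps_pos less_imp_le)
  then show ?thesis using eps_K_ge by linarith
qed

lemma card_nbhd_ge: "v \<in> V \<Longrightarrow> 10 * K \<le> real (card (N v))"
  using min_degree unfolding min_degree_ge_def degree_def by blast

lemma Delta_ge: "10 * K \<le> \<Delta>"
  using card_nbhd_ge ymax_in_Y Y_subset_V by blast

lemma eps_Delta_ge: "160 * real t \<le> \<epsilon> * \<Delta>"
  using mult_left_mono[OF Delta_ge, of \<epsilon>] eps_pos eps_K_ge by linarith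

lemma eps_Delta_le: "\<epsilon> * \<Delta> \<le> \<Delta>"
  using eps_lt_1 eps_pos by (simp add: mult_left_le_one_le)

lemma heavy_threshold_eq: "(1 - \<epsilon> / 4) * \<Delta> = \<Delta> - \<epsilon> * \<Delta> / 4"
  by (simp add: algebra_simps)

lemma P_subset_X: "P \<subseteq> X"
  using ymax_in_Y edge_Y_imp_X mem_nbhd_iff by blast

lemma max_deg_Y: "max_deg V E Y = card P"
  unfolding max_deg_def using finite_Y ymax_in_Y degree_le_ymax
  by (intro Max_eqI) (auto simp: degree_def)

lemma power_le_K:
  assumes "\<epsilon> / 8 \<le> \<alpha>"
  shows "real t * (2 / \<alpha>) ^ t \<le> K"
proof -
  have "2 / \<alpha> \<le> 2 / (\<epsilon> / 8)" using assms eps_pos by (intro frac_le) auto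
  then have "(2 / \<alpha>) ^ t \<le> (16 / \<epsilon>) ^ t" using assms eps_pos by (intro power_mono) auto
  then show ?thesis unfolding biclaw_bound_def by (intro mult_left_mono) auto
qed

lemma card_lt_K_if_many_non_neighbours:
  assumes "E x y" "T \<subseteq> N y - {x}" "R \<subseteq> N x - {y}" "\<epsilon> / 8 \<le> \<alpha>"
    and "2 * real t \<le> \<alpha> * real (card T)"
    and "\<forall>r\<in>R. \<alpha> * real (card T) \<le> real (card {u\<in>T. \<not> E r u})"
  shows "real (card R) < K"
proof -
  have "0 < \<alpha>" using assms(4) eps_pos by linarith
  then show ?thesis
    using card_lt_if_many_non_neighbours[OF assms(1-3) _ assms(5,6)] power_le_K[OF assms(4)]
    by linarith
qed

lemma ymax_heavy: "ymax \<in> heavy"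
  unfolding heavy_def heavy_threshold_eq using ymax_in_Y eps_Delta_ge t_ge_1 by simp

lemma heavy_subset_half_heavy: "heavy \<subseteq> half_heavy"
  unfolding heavy_def half_heavy_def heavy_threshold_eq using eps_Delta_le by force

lemma heavy_disjoint_low_set: "heavy \<inter> low_set V E Y \<epsilon> = {}"
proof -
  have "(1 - \<epsilon>) * \<Delta> < real (card (N y))" if "y \<in> heavy" for y
  proof -
    have "card (N y \<inter> P) \<le> card (N y)" by (simp add: card_mono finite_nbhd)
    moreover have "(1 - \<epsilon>) * \<Delta> = \<Delta> - \<epsilon> * \<Delta>" by (simp add: algebra_simps)
    ultimately show ?thesis
      using that eps_Delta_ge t_ge_1 unfolding heavy_def heavy_threshold_eq by auto
  qed
  then show ?thesis unfolding low_set_def max_deg_Y degree_def by force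
qed

lemma card_nbhd_diff_heavy_lt_if_in_P:
  assumes "x \<in> P"
  shows "real (card (N x - heavy)) < K"
proof (rule card_lt_K_if_many_non_neighbours)
  show "E x ymax" using assms mem_nbhd_iff edge_sym by blast
  show "P - {x} \<subseteq> N ymax - {x}" "\<epsilon> / 8 \<le> \<epsilon> / 8" by auto
  show "N x - heavy \<subseteq> N x - {ymax}" using ymax_heavy by blast
  have "1 \<le> card P" using assms finite_nbhd[of ymax] by (simp add: Suc_le_eq card_gt_0_iff) blast
  then have card_T: "real (card (P - {x})) = \<Delta> - 1"
    using assms by (simp add: of_nat_diff)
  have eq: "\<epsilon> / 8 * real (card (P - {x})) = \<epsilon> * \<Delta> / 8 - \<epsilon> / 8"
    unfolding card_T by (simp add: algebra_simps)
  show "2 * real t \<le> \<epsilon> / 8 * real (card (P - {x}))"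
    unfolding eq using eps_Delta_ge eps_lt_1 eps_pos t_ge_1 by linarith
  show "\<forall>r\<in>N x - heavy. \<epsilon> / 8 * real (card (P - {x})) \<le> real (card {u\<in>P - {x}. \<not> E r u})"
  proof
    fix r assume r: "r \<in> N x - heavy"
    have "x \<in> X" "E x r" using assms P_subset_X r mem_nbhd_iff by auto
    then have "r \<in> Y" by (rule edge_X_imp_Y[rotated])
    then have "real (card (N r \<inter> P)) < \<Delta> - \<epsilon> * \<Delta> / 4"
      using r by (simp add: heavy_def heavy_threshold_eq not_le)
    moreover have "real (card (P - {x})) - real (card (N r \<inter> P)) \<le> real (card {u\<in>P - {x}. \<not> E r u})"
      by (rule card_filter_not_ge) (auto simp: finite_nbhd mem_nbhd_iff)
    ultimately show "\<epsilon> / 8 * real (card (P - {x})) \<le> real (card {u\<in>P - {x}. \<not> E r u})"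
      unfolding eq using card_T eps_Delta_ge eps_pos t_ge_1 by linarith
  qed
qed

lemma card_half_heavy_diff_heavy_le: "real (card (half_heavy - heavy)) \<le> 2 * K"
proof -
  define W where "W = half_heavy - heavy"
  have "finite W" using finite_Y unfolding W_def half_heavy_def by auto
  have "real (card W) * (\<Delta> / 2) = (\<Sum>w\<in>W. \<Delta> / 2)" by simp
  also have "\<dots> \<le> (\<Sum>w\<in>W. real (card {x\<in>P. E x w}))"
  proof (rule sum_mono)
    fix w assume "w \<in> W"
    moreover have "N w \<inter> P = {x\<in>P. E x w}" using mem_nbhd_iff edge_sym by blast
    ultimately show "\<Delta> / 2 \<le> real (card {x\<in>P. E x w})" unfolding W_def half_heavy_def by auto
  qed
  also have "\<dots> = (\<Sum>x\<in>P. real (card {w\<in>W. E x w}))"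
    using sum_card_filter_swap[OF finite_nbhd \<open>finite W\<close>, of E] by (simp flip: of_nat_sum)
  also have "\<dots> \<le> (\<Sum>x\<in>P. K)"
  proof (rule sum_mono)
    fix x assume "x \<in> P"
    have "{w\<in>W. E x w} \<subseteq> N x - heavy" unfolding W_def using mem_nbhd_iff by blast
    then have "card {w\<in>W. E x w} \<le> card (N x - heavy)" by (simp add: card_mono finite_nbhd)
    then show "real (card {w\<in>W. E x w}) \<le> K"
      using card_nbhd_diff_heavy_lt_if_in_P[OF \<open>x \<in> P\<close>] by linarith
  qed
  also have "\<dots> = \<Delta> * K" by simp
  finally have "real (card W) * \<Delta> \<le> (2 * K) * \<Delta>" by (simp add: algebra_simps)
  moreover have "0 < \<Delta>" using Delta_ge K_ge t_ge_1 by linarith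
  ultimately show ?thesis unfolding W_def by simp
qed

lemma card_nbhd_diff_half_heavy_lt:
  assumes "x \<in> X" "y \<in> heavy" "E x y"
  shows "real (card (N x - half_heavy)) < K"
proof -
  define T where "T = N y \<inter> P - {x}"
  have "card (N y \<inter> P) \<le> card T + 1"
  proof (cases "x \<in> N y \<inter> P")
    case True
    then show ?thesis unfolding T_def using card_Suc_Diff1[of "N y \<inter> P" x] finite_nbhd by simp
  qed (simp add: T_def)
  then have card_T: "\<Delta> - \<epsilon> * \<Delta> / 4 - 1 \<le> real (card T)"
    using assms(2) unfolding heavy_def heavy_threshold_eq by auto
  show ?thesis
  proof (rule card_lt_K_if_many_non_neighbours[OF assms(3)])
    show "T \<subseteq> N y - {x}" "\<epsilon> / 8 \<le> 1 / 4" unfolding T_def using eps_lt_1 by auto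
    show "N x - half_heavy \<subseteq> N x - {y}" using assms(2) heavy_subset_half_heavy by blast
    show "2 * real t \<le> 1 / 4 * real (card T)"
      using card_T eps_Delta_ge eps_Delta_le t_ge_1 by linarith
    show "\<forall>r\<in>N x - half_heavy. 1 / 4 * real (card T) \<le> real (card {u\<in>T. \<not> E r u})"
    proof
      fix r assume r: "r \<in> N x - half_heavy"
      then have "r \<in> Y" using assms(1) edge_X_imp_Y mem_nbhd_iff by blast
      then have "real (card (N r \<inter> P)) < \<Delta> / 2"
        using r by (simp add: half_heavy_def not_le)
      moreover have "real (card T) - real (card (N r \<inter> P)) \<le> real (card {u\<in>T. \<not> E r u})"
        by (rule card_filter_not_ge) (auto simp: T_def finite_nbhd mem_nbhd_iff)
      ultimately show "1 / 4 * real (card T) \<le> real (card {u\<in>T. \<not> E r u})"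
        using card_T eps_Delta_ge eps_Delta_le t_ge_1 by linarith
    qed
  qed
qed

lemma card_nbhd_diff_heavy_lt:
  assumes "x \<in> X" "touches_heavy x"
  shows "real (card (N x - heavy)) < 3 * K"
proof -
  obtain y where "y \<in> heavy" "E x y" using assms(2) unfolding touches_heavy_def by blast
  have "finite (half_heavy - heavy)" using finite_Y unfolding half_heavy_def by auto
  then have "card (N x - heavy) \<le> card ((N x - half_heavy) \<union> (half_heavy - heavy))"
    by (intro card_mono) (auto simp: finite_nbhd)
  also have "\<dots> \<le> card (N x - half_heavy) + card (half_heavy - heavy)" by (rule card_Un_le)
  finally show ?thesis
    using card_nbhd_diff_half_heavy_lt[OF assms(1) \<open>y \<in> heavy\<close> \<open>E x y\<close>]
      card_half_heavy_diff_heavy_le by linarith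
qed

lemma card_lt_K_if_few_common_neighbours:
  assumes "E x y" "R \<subseteq> N y - {x}" "\<forall>r\<in>R. real (card {u\<in>N x. E r u}) < 3 * K"
  shows "real (card R) < K"
proof (rule card_lt_K_if_many_non_neighbours[OF edge_sym[OF assms(1)] _ assms(2)])
  have "y \<in> N x" using assms(1) mem_nbhd_iff by blast
  then have "Suc (card (N x - {y})) = card (N x)" by (rule card_Suc_Diff1[OF finite_nbhd])
  then have "real (card (N x)) = real (card (N x - {y})) + 1" by (metis of_nat_Suc add.commute)
  moreover have "10 * K \<le> real (card (N x))" using card_nbhd_ge edge_in_V assms(1) by blast
  ultimately have card_T: "10 * K - 1 \<le> real (card (N x - {y}))" by linarith
  show "N x - {y} \<subseteq> N x - {y}" "\<epsilon> / 8 \<le> 1 / 2" using eps_lt_1 by auto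
  show "2 * real t \<le> 1 / 2 * real (card (N x - {y}))" using card_T K_ge t_ge_1 by linarith
  show "\<forall>r\<in>R. 1 / 2 * real (card (N x - {y})) \<le> real (card {u\<in>N x - {y}. \<not> E r u})"
  proof
    fix r assume "r \<in> R"
    have "real (card (N x - {y})) - real (card {u\<in>N x. E r u})
        \<le> real (card {u\<in>N x - {y}. \<not> E r u})"
      by (rule card_filter_not_ge) (auto simp: finite_nbhd)
    moreover have "real (card {u\<in>N x. E r u}) < 3 * K" using assms(3) \<open>r \<in> R\<close> by blast
    ultimately show "1 / 2 * real (card (N x - {y})) \<le> real (card {u\<in>N x - {y}. \<not> E r u})"
      using card_T K_ge t_ge_1 by linarith
  qed
qed

text \<open>Otherwise the middle vertex \<open>y\<close> would have fewer than \<open>10 K\<close> neighbours: those not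
  adjacent to a heavy vertex share few neighbours with \<open>x\<close>, and those adjacent to one share
  few neighbours with \<open>x'\<close>.\<close>

lemma touches_heavy_two_step:
  assumes "x \<in> X" "touches_heavy x" "E x y" "E y x'"
  shows "touches_heavy x'"
proof (rule ccontr)
  assume x'_far: "\<not> touches_heavy x'"
  define R1 where "R1 = {r \<in> N y - {x}. \<not> touches_heavy r}"
  define R2 where "R2 = {r \<in> N y - {x'}. touches_heavy r}"
  have "real (card R1) < K"
  proof (rule card_lt_K_if_few_common_neighbours[OF assms(3)])
    show "R1 \<subseteq> N y - {x}" unfolding R1_def by blast
    show "\<forall>r\<in>R1. real (card {u\<in>N x. E r u}) < 3 * K"
    proof
      fix r assume "r \<in> R1"
      then have "{u\<in>N x. E r u} \<subseteq> N x - heavy" unfolding R1_def touches_heavy_def by blast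
      then have "card {u\<in>N x. E r u} \<le> card (N x - heavy)" by (simp add: card_mono finite_nbhd)
      then show "real (card {u\<in>N x. E r u}) < 3 * K"
        using card_nbhd_diff_heavy_lt[OF assms(1,2)] by linarith
    qed
  qed
  moreover have "real (card R2) < K"
  proof (rule card_lt_K_if_few_common_neighbours[OF edge_sym[OF assms(4)]])
    show "R2 \<subseteq> N y - {x'}" unfolding R2_def by blast
    show "\<forall>r\<in>R2. real (card {u\<in>N x'. E r u}) < 3 * K"
    proof
      fix r assume "r \<in> R2"
      have "y \<in> Y" using assms(1,3) edge_X_imp_Y by blast
      then have "r \<in> X" using \<open>r \<in> R2\<close> edge_Y_imp_X mem_nbhd_iff unfolding R2_def by blast
      have "{u\<in>N x'. E r u} \<subseteq> N r - heavy"
        using x'_far mem_nbhd_iff unfolding touches_heavy_def by blast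
      then have "card {u\<in>N x'. E r u} \<le> card (N r - heavy)" by (simp add: card_mono finite_nbhd)
      moreover have "touches_heavy r" using \<open>r \<in> R2\<close> unfolding R2_def by blast
      ultimately show "real (card {u\<in>N x'. E r u}) < 3 * K"
        using card_nbhd_diff_heavy_lt[OF \<open>r \<in> X\<close>] by linarith
    qed
  qed
  moreover have "card (N y) \<le> 2 + card R1 + card R2"
  proof -
    have "N y \<subseteq> {x, x'} \<union> R1 \<union> R2" unfolding R1_def R2_def by blast
    then have "card (N y) \<le> card ({x, x'} \<union> R1 \<union> R2)"
      using finite_nbhd unfolding R1_def R2_def by (intro card_mono) auto
    also have "\<dots> \<le> card {x, x'} + card R1 + card R2"
      using card_Un_le[of "{x, x'} \<union> R1" R2] card_Un_le[of "{x, x'}" R1] by linarith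
    also have "card {x, x'} \<le> 2" by (simp add: card_insert_if)
    finally show ?thesis by simp
  qed
  moreover have "10 * K \<le> real (card (N y))" using card_nbhd_ge edge_in_V assms(4) by blast
  ultimately show False using K_ge t_ge_1 by linarith
qed

lemma touches_heavy_if_reachable:
  assumes "E\<^sup>*\<^sup>* ymax v"
  shows "(v \<in> X \<longrightarrow> touches_heavy v) \<and> (v \<in> Y \<longrightarrow> (\<forall>x. E v x \<longrightarrow> touches_heavy x))"
  using assms
proof (induction rule: rtranclp_induct)
  case base
  have "ymax \<notin> X" using ymax_in_Y parts_disjoint by blast
  then show ?case using ymax_heavy edge_sym unfolding touches_heavy_def by blast
next
  case (step v w)
  show ?case
  proof (intro conjI impI allI)
    assume "w \<in> X"
    then have "v \<in> Y" using edge_X_imp_Y edge_sym[OF step.hyps(2)] by blast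
    then show "touches_heavy w" using step.IH step.hyps(2) by blast
  next
    fix x assume "w \<in> Y" "E w x"
    then have "v \<in> X" using edge_Y_imp_X edge_sym[OF step.hyps(2)] by blast
    then show "touches_heavy x"
      using touches_heavy_two_step[OF _ _ step.hyps(2) \<open>E w x\<close>] step.IH by blast
  qed
qed

lemma card_low_neighbours_lt:
  assumes "connected_graph V E" "x \<in> X"
  shows "real (card (N x \<inter> low_set V E Y \<epsilon>)) < 3 * K"
proof -
  have "E\<^sup>*\<^sup>* ymax x"
    using assms ymax_in_Y X_subset_V Y_subset_V unfolding connected_graph_def by blast
  then have "touches_heavy x" using touches_heavy_if_reachable assms(2) by blast
  moreover have "N x \<inter> low_set V E Y \<epsilon> \<subseteq> N x - heavy" using heavy_disjoint_low_set by blast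
  then have "card (N x \<inter> low_set V E Y \<epsilon>) \<le> card (N x - heavy)" by (simp add: card_mono finite_nbhd)
  ultimately show ?thesis using card_nbhd_diff_heavy_lt[OF assms(2)] by linarith
qed

end

lemma (in biclaw_free_bipartite) card_low_neighbours_le:
  assumes "connected_graph V E" "0 < t" "0 < \<epsilon>" "\<epsilon> < 1"
    and "min_degree_ge V E (10 * biclaw_bound t \<epsilon>)" and "x \<in> X"
  shows "real (card (N x \<inter> low_set V E Y \<epsilon>)) \<le> 10 * biclaw_bound t \<epsilon>"
proof -
  have "0 < biclaw_bound t \<epsilon>" using assms(2,3) by (simp add: biclaw_bound_def)
  moreover have "10 * biclaw_bound t \<epsilon> \<le> real (card (N x))"
    using assms(5) \<open>x \<in> X\<close> X_subset_V unfolding min_degree_ge_def degree_def by blast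
  ultimately obtain y where "y \<in> N x" by fastforce
  then have "Y \<noteq> {}" using edge_X_imp_Y mem_nbhd_iff \<open>x \<in> X\<close> by blast
  then have "Max (degree V E ` Y) \<in> degree V E ` Y" using finite_Y by (intro Max_in) auto
  then obtain ymax where "ymax \<in> Y" and ymax_max: "degree V E ymax = Max (degree V E ` Y)"
    by (metis imageE)
  interpret max_degree_vertex V E X Y t \<epsilon> ymax
    using assms \<open>ymax \<in> Y\<close> finite_Y by unfold_locales (auto simp: ymax_max)
  show ?thesis
    using card_low_neighbours_lt[OF assms(1) \<open>x \<in> X\<close>] \<open>0 < biclaw_bound t \<epsilon>\<close> by linarith
qed

theorem mainTheorem10:
  shows "\<exists>C :: nat \<Rightarrow> real \<Rightarrow> real. \<forall>t::nat. \<forall>\<epsilon>::real.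
    t > 0 \<and> 0 < \<epsilon> \<and> \<epsilon> < 1 \<longrightarrow>
    (\<forall>V E X Y. graph V E \<and> connected_graph V E \<and> bipartite_parts V E X Y \<and> card X = card Y
       \<and> min_degree_ge V E (C t \<epsilon>) \<and> \<not> has_induced_biclaw V E t t \<longrightarrow>
       (\<forall>x\<in>X. real (card (nbhd V E x \<inter> low_set V E Y \<epsilon>)) \<le> C t \<epsilon>) \<and>
       (\<forall>y\<in>Y. real (card (nbhd V E y \<inter> low_set V E X \<epsilon>)) \<le> C t \<epsilon>))"
proof (intro exI[of _ "\<lambda>t \<epsilon>. 10 * biclaw_bound t \<epsilon>"] allI impI)
  fix t :: nat and \<epsilon> :: real and V E X Y
  assume params: "0 < t \<and> 0 < \<epsilon> \<and> \<epsilon> < 1"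
    and G: "graph V E \<and> connected_graph V E \<and> bipartite_parts V E X Y \<and> card X = card Y
      \<and> min_degree_ge V E (10 * biclaw_bound t \<epsilon>) \<and> \<not> has_induced_biclaw V E t t"
  then have "biclaw_free_bipartite V E X Y t" "biclaw_free_bipartite V E Y X t"
    by (auto simp: biclaw_free_bipartite_def bipartite_parts_swap)
  then show "(\<forall>x\<in>X. real (card (nbhd V E x \<inter> low_set V E Y \<epsilon>)) \<le> 10 * biclaw_bound t \<epsilon>) \<and>
      (\<forall>y\<in>Y. real (card (nbhd V E y \<inter> low_set V E X \<epsilon>)) \<le> 10 * biclaw_bound t \<epsilon>)"
    using biclaw_free_bipartite.card_low_neighbours_le params G by blast
qed

end
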